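(* Suppose the Markov chain $\Xi$ on $\mathbb X\subseteq\mathbb R_+$ satisfies $(\mathrm T_{\alpha,\beta,c})$. Then for every $\nu$ with $\alpha-\beta<\nu<\alpha$, as $x\to\infty$, $$D_0(x)=\nu x^{\nu-1}\mathbb E_x[\theta]+c\nu x^{\nu-\alpha}\kappa_0(\nu)+o(x^{\nu-\alpha}),\qquad \kappa_0(\nu):=(1-\nu)\frac{\Gamma(\alpha-\nu)\Gamma(1-\alpha)}{\Gamma(2-\nu)}.$$
   Context: $\theta:=\xi_1-\xi_0$; $\mathbb P_x,\mathbb E_x$ refer to the chain started at $x$; $y_+:=y\mathbf 1\{y\ge0\}$, $y_-:=-y\mathbf 1\{y<0\}$. $f_0^\nu(x)=x^\nu$ for $x\ge1$, $=1$ for $0\le x<1$; $D_0(x):=\mathbb E[f_0^\nu(\xi_{n+1})-f_0^\nu(\xi_n)\mid\xi_n=x]$. $(\mathrm T_{\alpha,\beta,c})$: there exist $\alpha\in(1,2)$, $\beta>\alpha$, $c>0$, $x_0\in\mathbb R_+$ with $\lim_{y\to\infty}\sup_{x\ge x_0}|y^\alpha\mathbb P_x[\theta_+>y]-c|=0$ and $\sup_{x\ge x_0}\mathbb E_x[\theta_-^\beta]<\infty$. $\Gamma$ is the gamma function. *)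

theory Defs
  imports "HOL-Probability.Probability" "HOL-Library.Landau_Symbols"
begin

text \<open>One-step transition kernel K of the time-homogeneous Markov chain on
  the state space X: K x is the law of xi_1 under P_x. theta = xi_1 - xi_0,
  so under P_x, theta = z - x with z distributed as K x.\<close>

definition f0 :: "real \<Rightarrow> real \<Rightarrow> real" where
  "f0 \<nu> x = (if x \<ge> 1 then x powr \<nu> else 1)"

definition D0 :: "(real \<Rightarrow> real measure) \<Rightarrow> real \<Rightarrow> real \<Rightarrow> real" where
  "D0 K \<nu> x = (\<integral>z. f0 \<nu> z \<partial>K x) - f0 \<nu> x"

definition mean_incr :: "(real \<Rightarrow> real measure) \<Rightarrow> real \<Rightarrow> real" where
  "mean_incr K x = (\<integral>z. (z - x) \<partial>K x)"

definition kappa0 :: "real \<Rightarrow> real \<Rightarrow> real" where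
  "kappa0 \<alpha> \<nu> = (1 - \<nu>) * Gamma (\<alpha> - \<nu>) * Gamma (1 - \<alpha>) / Gamma (2 - \<nu>)"

text \<open>The uniform limit lim_{y\<rightarrow>\<infinity>} sup_{x\<ge>x0} |y^alpha P_x[theta_+ > y] - c| = 0
  is written out via epsilon; sup_{x\<ge>x0} E_x[theta_-^beta] < \<infinity> via an
  extended-nonnegative supremum.\<close>

definition cond_T :: "real set \<Rightarrow> (real \<Rightarrow> real measure) \<Rightarrow> real \<Rightarrow> real \<Rightarrow> real \<Rightarrow> real \<Rightarrow> bool" where
  "cond_T X K \<alpha> \<beta> c x0 \<longleftrightarrow>
     1 < \<alpha> \<and> \<alpha> < 2 \<and> \<beta> > \<alpha> \<and> c > 0 \<and> x0 \<ge> 0 \<and>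
     (\<forall>\<epsilon>>0. \<exists>Y. \<forall>y\<ge>Y. \<forall>x\<in>X. x \<ge> x0 \<longrightarrow>
        \<bar>y powr \<alpha> * measure (K x) {z. max (z - x) 0 > y} - c\<bar> \<le> \<epsilon>) \<and>
     (SUP x\<in>{x\<in>X. x \<ge> x0}. \<integral>\<^sup>+ z. ennreal ((max (x - z) 0) powr \<beta>) \<partial>K x) < \<infinity>"

end

theory Submission
  imports Defs
begin

text \<open>
  For a jump \<open>\<theta> = z - x\<close> from \<open>x \<ge> 2\<close>,
  \<open>f0 z - f0 x - \<nu> x powr (\<nu> - 1) \<theta> = G (max \<theta> 0) + H z\<close>, where
  \<open>G t = (x + t) powr \<nu> - x powr \<nu> - \<nu> x powr (\<nu> - 1) t\<close> is the first-order Taylor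
  remainder and \<open>H z = 0\<close> unless \<open>z < x\<close>.

  \<open>G\<close> and \<open>G'\<close> have the constant sign of \<open>\<nu> (\<nu> - 1)\<close>, so by the layer-cake formula
  \<open>E |G (max \<theta> 0)| = \<integral>\<^sub>0\<^sup>\<infinity> |G' y| P[\<theta> > y] dy\<close>. Above a level \<open>Y\<close> the tail is
  \<open>c y powr (-\<alpha>)\<close> up to a relative error \<open>\<epsilon>\<close>; below \<open>Y\<close> the bound
  \<open>|G' y| = O(x powr (\<nu> - 2) y)\<close> makes the contribution \<open>O(x powr (\<nu> - 2))\<close>. By Tonelli
  and the substitution \<open>w = x s / (1 - s)\<close>,
  \<open>\<integral>\<^sub>0\<^sup>\<infinity> |G' y| y powr (-\<alpha>) dy = |\<nu> (\<nu> - 1)| / (\<alpha> - 1) B(2 - \<alpha>, \<alpha> - \<nu>) x powr (\<nu> - \<alpha>)\<close>,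
  which with the sign restored is \<open>\<nu> \<kappa>\<^sub>0(\<nu>) x powr (\<nu> - \<alpha>)\<close>.

  For downward jumps, the second-order Taylor bound when \<open>z \<ge> x/2\<close> and crude bounds otherwise
  give \<open>|H z| \<le> C x powr p (1 + (x - z) powr \<beta>)\<close> with \<open>p = max (\<nu> - min \<beta> 2) (-\<beta>)\<close>,
  and \<open>p < \<nu> - \<alpha>\<close> because \<open>\<nu> > \<alpha> - \<beta>\<close>; the uniform bound on the \<open>\<beta>\<close>-th moment of the
  downward jump then makes their contribution \<open>o(x powr (\<nu> - \<alpha>))\<close>.
\<close>

section \<open>Taylor remainder of the power function\<close>

definition powr_taylor_rem :: "real \<Rightarrow> real \<Rightarrow> real \<Rightarrow> real" where
  "powr_taylor_rem \<nu> x t = (x + t) powr \<nu> - x powr \<nu> - \<nu> * x powr (\<nu> - 1) * t"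

definition powr_taylor_rem_deriv :: "real \<Rightarrow> real \<Rightarrow> real \<Rightarrow> real" where
  "powr_taylor_rem_deriv \<nu> x y = \<nu> * ((x + y) powr (\<nu> - 1) - x powr (\<nu> - 1))"

text \<open>The sign of the Taylor remainder and of its derivative. At \<open>\<nu> \<in> {0, 1}\<close>, where both
  vanish, the value \<open>1\<close> is chosen so that \<open>curv_sign \<nu>\<close> stays invertible.\<close>
definition curv_sign :: "real \<Rightarrow> real" where
  "curv_sign \<nu> = (if \<nu> * (\<nu> - 1) \<ge> 0 then 1 else -1)"

lemma curv_sign_mult_self [simp]: "curv_sign \<nu> * curv_sign \<nu> = 1"
  and abs_curv_sign [simp]: "\<bar>curv_sign \<nu>\<bar> = 1"
  and curv_sign_mult: "curv_sign \<nu> * \<nu> * (\<nu> - 1) = \<bar>\<nu>\<bar> * \<bar>\<nu> - 1\<bar>"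
  by (auto simp: curv_sign_def abs_mult[symmetric])

lemma powr_diff_le_mean_value:
  fixes a b p :: real
  assumes "0 < a" "a \<le> b" "p \<le> 1"
  shows "\<bar>b powr p - a powr p\<bar> \<le> \<bar>p\<bar> * a powr (p - 1) * (b - a)"
proof (cases "a = b")
  case False
  then have ab: "a < b" using assms by simp
  have "\<And>w. a \<le> w \<Longrightarrow> w \<le> b \<Longrightarrow> ((\<lambda>w. w powr p) has_real_derivative p * w powr (p - 1)) (at w)"
    using assms by (auto intro!: derivative_eq_intros)
  from MVT2[OF ab this] obtain z where z: "a < z" "z < b"
    and eq: "b powr p - a powr p = (b - a) * (p * z powr (p - 1))" by blast
  have "z powr (p - 1) \<le> a powr (p - 1)" using z assms by (intro powr_mono2') auto
  then have "(b - a) * (\<bar>p\<bar> * z powr (p - 1)) \<le> (b - a) * (\<bar>p\<bar> * a powr (p - 1))"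
    using ab by (intro mult_left_mono) auto
  then show ?thesis using eq z ab by (simp add: abs_mult mult_ac)
qed simp

lemma powr_taylor_rem_zero [simp]: "powr_taylor_rem \<nu> x 0 = 0"
  by (simp add: powr_taylor_rem_def)

lemma powr_taylor_rem_has_derivative:
  assumes "x > 0" "y > -x"
  shows "(powr_taylor_rem \<nu> x has_real_derivative powr_taylor_rem_deriv \<nu> x y) (at y)"
  unfolding powr_taylor_rem_def powr_taylor_rem_deriv_def using assms
  by (auto intro!: derivative_eq_intros simp: algebra_simps)

lemma powr_taylor_rem_deriv_has_integral:
  assumes x: "x > 0" and y: "y \<ge> 0"
  shows "((\<lambda>w. \<nu> * (\<nu> - 1) * (x + w) powr (\<nu> - 2)) has_integral powr_taylor_rem_deriv \<nu> x y) {0..y}"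
proof -
  have "((\<lambda>w. \<nu> * (x + w) powr (\<nu> - 1)) has_vector_derivative \<nu> * (\<nu> - 1) * (x + w) powr (\<nu> - 2))
          (at w within {0..y})" if "w \<in> {0..y}" for w
  proof -
    have "(x + w) powr (\<nu> - 1) / (x + w) = (x + w) powr (\<nu> - 2)"
      using that x powr_diff[of "x + w" "\<nu> - 1" 1] by simp
    then have "((\<lambda>w. \<nu> * (x + w) powr (\<nu> - 1)) has_real_derivative \<nu> * (\<nu> - 1) * (x + w) powr (\<nu> - 2)) (at w)"
      using that x by (auto intro!: derivative_eq_intros simp: field_simps)
    then show ?thesis
      by (simp add: has_real_derivative_iff_has_vector_derivative[symmetric] has_field_derivative_at_within)
  qed
  from fundamental_theorem_of_calculus[OF y this] show ?thesis
    by (simp add: powr_taylor_rem_deriv_def right_diff_distrib)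
qed

lemma powr_taylor_rem_deriv_sign:
  assumes "x > 0" "y \<ge> 0"
  shows "\<bar>powr_taylor_rem_deriv \<nu> x y\<bar> = curv_sign \<nu> * powr_taylor_rem_deriv \<nu> x y"
proof -
  have "0 \<le> curv_sign \<nu> * (\<nu> * (\<nu> - 1) * (x + w) powr (\<nu> - 2))" for w
    by (auto simp: curv_sign_def mult_nonpos_nonneg)
  then have "0 \<le> curv_sign \<nu> * powr_taylor_rem_deriv \<nu> x y"
    using has_integral_nonneg[OF has_integral_mult_right[OF powr_taylor_rem_deriv_has_integral[OF assms]]]
    by blast
  then show ?thesis by (cases "\<nu> * (\<nu> - 1) \<ge> 0") (auto simp: curv_sign_def)
qed

lemma abs_powr_taylor_rem_deriv_has_integral:
  assumes "x > 0" "y \<ge> 0"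
  shows "((\<lambda>w. \<bar>\<nu>\<bar> * \<bar>\<nu> - 1\<bar> * (x + w) powr (\<nu> - 2)) has_integral \<bar>powr_taylor_rem_deriv \<nu> x y\<bar>) {0..y}"
proof -
  have "((\<lambda>w. curv_sign \<nu> * (\<nu> * (\<nu> - 1) * (x + w) powr (\<nu> - 2)))
          has_integral curv_sign \<nu> * powr_taylor_rem_deriv \<nu> x y) {0..y}"
    by (rule has_integral_mult_right[OF powr_taylor_rem_deriv_has_integral[OF assms]])
  then show ?thesis
    by (simp only: powr_taylor_rem_deriv_sign[OF assms] mult.assoc[symmetric] curv_sign_mult)
qed

lemma powr_taylor_rem_has_integral:
  assumes x: "x > 0" and t: "t \<ge> 0"
  shows "(powr_taylor_rem_deriv \<nu> x has_integral powr_taylor_rem \<nu> x t) {0..t}"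
proof -
  have "(powr_taylor_rem \<nu> x has_vector_derivative powr_taylor_rem_deriv \<nu> x y) (at y within {0..t})"
    if "y \<in> {0..t}" for y
    using has_field_derivative_at_within[OF powr_taylor_rem_has_derivative[OF x]] that x
    by (simp add: has_real_derivative_iff_has_vector_derivative)
  from fundamental_theorem_of_calculus[OF t this] show ?thesis by simp
qed

lemma powr_taylor_rem_sign:
  assumes "x > 0" "t \<ge> 0"
  shows "\<bar>powr_taylor_rem \<nu> x t\<bar> = curv_sign \<nu> * powr_taylor_rem \<nu> x t"
proof -
  have "0 \<le> curv_sign \<nu> * powr_taylor_rem \<nu> x t"
    using has_integral_mult_right[OF powr_taylor_rem_has_integral[OF assms], of "curv_sign \<nu>"]
    by (rule has_integral_nonneg) (use assms powr_taylor_rem_deriv_sign in \<open>metis abs_ge_zero atLeastAtMost_iff\<close>)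
  then show ?thesis by (cases "\<nu> * (\<nu> - 1) \<ge> 0") (auto simp: curv_sign_def)
qed

lemma powr_taylor_rem_abs_has_integral:
  assumes "x > 0" "t \<ge> 0"
  shows "((\<lambda>y. \<bar>powr_taylor_rem_deriv \<nu> x y\<bar>) has_integral \<bar>powr_taylor_rem \<nu> x t\<bar>) {0..t}"
proof -
  have "((\<lambda>y. curv_sign \<nu> * powr_taylor_rem_deriv \<nu> x y) has_integral \<bar>powr_taylor_rem \<nu> x t\<bar>) {0..t}"
    using has_integral_mult_right[OF powr_taylor_rem_has_integral[OF assms]]
    by (simp add: powr_taylor_rem_sign[OF assms])
  then show ?thesis
    by (rule has_integral_eq[rotated]) (use assms powr_taylor_rem_deriv_sign in auto)
qed

lemma abs_powr_taylor_rem_deriv_le: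
  assumes "x > 0" "y \<ge> 0" "\<nu> \<le> 2"
  shows "\<bar>powr_taylor_rem_deriv \<nu> x y\<bar> \<le> \<bar>\<nu>\<bar> * \<bar>\<nu> - 1\<bar> * x powr (\<nu> - 2) * y"
proof -
  have "\<bar>(x + y) powr (\<nu> - 1) - x powr (\<nu> - 1)\<bar> \<le> \<bar>\<nu> - 1\<bar> * x powr (\<nu> - 1 - 1) * ((x + y) - x)"
    using assms by (intro powr_diff_le_mean_value) auto
  then show ?thesis
    by (simp add: powr_taylor_rem_deriv_def abs_mult mult_left_mono mult.assoc)
qed

lemma abs_powr_taylor_rem_le_square:
  assumes x: "x > 0" and t: "-x/2 \<le> t" "t \<le> 0" and \<nu>: "\<nu> \<le> 2"
  shows "\<bar>powr_taylor_rem \<nu> x t\<bar> \<le> \<bar>\<nu>\<bar> * \<bar>\<nu> - 1\<bar> * (x/2) powr (\<nu> - 2) * t\<^sup>2"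
proof (cases "t = 0")
  case False
  with t have "t < 0" by simp
  moreover have "(powr_taylor_rem \<nu> x has_real_derivative powr_taylor_rem_deriv \<nu> x w) (at w)"
    if "t \<le> w" "w \<le> 0" for w
    using that t x by (intro powr_taylor_rem_has_derivative) auto
  ultimately obtain w where w: "t < w" "w < 0"
    and eq: "0 - powr_taylor_rem \<nu> x t = (0 - t) * powr_taylor_rem_deriv \<nu> x w"
    using MVT2[of t 0] by fastforce
  have xw: "0 < x + w" "x/2 \<le> x + w" using w t x by auto
  have "\<bar>x powr (\<nu> - 1) - (x + w) powr (\<nu> - 1)\<bar> \<le> \<bar>\<nu> - 1\<bar> * (x + w) powr (\<nu> - 1 - 1) * (x - (x + w))"
    using xw w \<nu> by (intro powr_diff_le_mean_value) auto
  also have "\<dots> \<le> \<bar>\<nu> - 1\<bar> * (x/2) powr (\<nu> - 2) * (-t)"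
  proof -
    have "(x + w) powr (\<nu> - 2) \<le> (x/2) powr (\<nu> - 2)"
      using xw \<nu> x by (intro powr_mono2') auto
    then show ?thesis using w by (intro mult_mono mult_left_mono) auto
  qed
  finally have "\<bar>powr_taylor_rem_deriv \<nu> x w\<bar> \<le> \<bar>\<nu>\<bar> * (\<bar>\<nu> - 1\<bar> * (x/2) powr (\<nu> - 2) * (-t))"
    unfolding powr_taylor_rem_deriv_def abs_mult by (intro mult_left_mono) (auto simp: abs_minus_commute)
  then have "(-t) * \<bar>powr_taylor_rem_deriv \<nu> x w\<bar> \<le> (-t) * (\<bar>\<nu>\<bar> * (\<bar>\<nu> - 1\<bar> * (x/2) powr (\<nu> - 2) * (-t)))"
    using \<open>t < 0\<close> by (intro mult_left_mono) auto
  then show ?thesis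
    using eq \<open>t < 0\<close> by (simp add: abs_mult power2_eq_square mult_ac)
qed simp

section \<open>Integrals against the tail \<open>y powr (-\<alpha>)\<close>\<close>

lemma Beta_substitution:
  fixes a b x s :: real
  assumes s: "0 < s" "s < 1" and x: "x > 0"
  shows "(x * s / (1 - s)) powr (a - 1) * (x + x * s / (1 - s)) powr (-(a + b)) * (x / (1 - s)\<^sup>2)
       = x powr (-b) * (s powr (a - 1) * (1 - s) powr (b - 1))"
proof -
  have u: "1 - s > 0" using s by simp
  have "x + x * s / (1 - s) = x / (1 - s)" using u by (simp add: field_simps)
  then have "(x * s / (1 - s)) powr (a - 1) * (x + x * s / (1 - s)) powr (-(a + b)) * (x / (1 - s)\<^sup>2)
      = (x powr (a - 1) * x powr (-(a + b)) * x powr 1) * s powr (a - 1)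
        * ((1 - s) powr (-(a - 1)) * (1 - s) powr (a + b) * (1 - s) powr (-2))"
    using u x s
    by (simp add: powr_divide powr_mult powr_minus_divide powr_numeral field_simps)
       (use u in \<open>simp flip: powr_add\<close>)
  also have "x powr (a - 1) * x powr (-(a + b)) * x powr 1 = x powr (-b)"
    by (simp only: powr_add[symmetric]) simp
  also have "(1 - s) powr (-(a - 1)) * (1 - s) powr (a + b) * (1 - s) powr (-2) = (1 - s) powr (b - 1)"
    by (simp flip: powr_add)
  finally show ?thesis by simp
qed

lemma Beta_integral_shifted:
  fixes a b x :: real
  assumes a: "a > 0" and b: "b > 0" and x: "x > 0"
  shows "set_integrable lborel {0<..} (\<lambda>w. w powr (a - 1) * (x + w) powr (-(a + b)))"
    and "(LBINT w:{0<..}. w powr (a - 1) * (x + w) powr (-(a + b))) = x powr (-b) * Beta a b"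
proof -
  define f where "f w = w powr (a - 1) * (x + w) powr (-(a + b))" for w :: real
  define beta where "beta s = s powr (a - 1) * (1 - s) powr (b - 1)" for s :: real
  define g where "g s = x * s / (1 - s)" for s :: real
  define g' where "g' s = x / (1 - s)\<^sup>2" for s :: real
  have subst: "f (g s) * g' s = x powr (-b) * beta s" if "0 < s" "s < 1" for s
    using Beta_substitution[OF that x] by (simp add: f_def g_def g'_def beta_def)
  have beta_int: "set_integrable lborel {0..1} beta"
    unfolding beta_def[abs_def] using integrable_Beta[OF a b] .
  have sub: "set_integrable lborel (einterval 0 \<infinity>) f"
       "(LBINT w=0..\<infinity>. f w) = (LBINT s=0..1. f (g s) * g' s)"
  proof -
    have "LIM s (at_left 1). (x * s) * inverse (1 - s) :> at_top"
      by (rule filterlim_tendsto_pos_mult_at_top[OF _ x filterlim_inverse_at_top])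
         (auto intro!: tendsto_eq_intros simp: eventually_at_filter)
    then have lim_top: "((ereal \<circ> g \<circ> real_of_ereal) \<longlongrightarrow> \<infinity>) (at_left 1)"
      unfolding one_ereal_def comp_assoc[symmetric] ereal_tendsto_simps1
      by (simp add: ereal_tendsto_simps2 g_def divide_inverse)
    have lim_0: "((ereal \<circ> g \<circ> real_of_ereal) \<longlongrightarrow> 0) (at_right 0)"
      unfolding zero_ereal_def ereal_tendsto_simps g_def by (auto intro!: tendsto_eq_intros)
    have "set_integrable lborel {0<..<1} beta"
      by (rule set_integrable_subset[OF beta_int]) auto
    then have "set_integrable lborel {0<..<1} (\<lambda>s. x powr (-b) * beta s)"
      by (rule set_integrable_mult_right)
    then have "set_integrable lborel (einterval 0 1) (\<lambda>s. f (g s) * g' s)"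
      unfolding zero_ereal_def one_ereal_def einterval_eq
      by (rule set_integrable_cong[THEN iffD1, rotated 3]) (auto simp: subst)
    moreover have "isCont f (g s)" if "0 < s" "s < 1" for s
    proof -
      have "g s > 0" using that x by (simp add: g_def)
      then show ?thesis using x unfolding f_def by (intro continuous_intros) auto
    qed
    moreover have "(g has_real_derivative g' s) (at s)" if "s < 1" for s
      using that unfolding g_def g'_def
      by (auto intro!: derivative_eq_intros simp: field_simps power2_eq_square)
    moreover have "isCont g' s" if "s < 1" for s
      using that unfolding g'_def by (intro continuous_intros) auto
    moreover have "0 \<le> f (g s)" if "0 < s" "s < 1" for s
      using that x by (simp add: f_def g_def)
    ultimately show "set_integrable lborel (einterval 0 \<infinity>) f"
         "(LBINT w=0..\<infinity>. f w) = (LBINT s=0..1. f (g s) * g' s)"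
      using interval_integral_substitution_nonneg[of 0 1 g g' f 0 \<infinity>] lim_0 lim_top x
      by (auto simp: g'_def zero_ereal_def one_ereal_def)
  qed
  show "set_integrable lborel {0<..} (\<lambda>w. w powr (a - 1) * (x + w) powr (-(a + b)))"
    using sub(1) by (simp add: f_def[abs_def] zero_ereal_def)
  have "(LBINT w:{0<..}. f w) = (LBINT s=0..1. x powr (-b) * beta s)"
    unfolding interval_lebesgue_integral_0_infty[symmetric] sub(2)
    by (rule interval_integral_cong) (auto simp: zero_ereal_def one_ereal_def subst)
  also have "\<dots> = x powr (-b) * integral {0..1} beta"
    using set_borel_integral_eq_integral(2)[OF beta_int]
    by (simp add: zero_ereal_def one_ereal_def interval_integral_Icc)
  also have "integral {0..1} beta = Beta a b"
    using has_integral_Beta_real[OF a b] by (simp add: beta_def[abs_def] integral_unique)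
  finally show "(LBINT w:{0<..}. w powr (a - 1) * (x + w) powr (-(a + b))) = x powr (-b) * Beta a b"
    by (simp add: f_def)
qed

lemma nn_integral_powr_tail:
  fixes w \<alpha> :: real
  assumes "w > 0" "\<alpha> > 1"
  shows "(\<integral>\<^sup>+y. ennreal (y powr (-\<alpha>)) * indicator {w..} y \<partial>lborel) = ennreal (w powr (1 - \<alpha>) / (\<alpha> - 1))"
proof -
  have "((\<lambda>y. y powr (-\<alpha>)) has_integral -(w powr (-\<alpha> + 1)) / (-\<alpha> + 1)) {w..}"
    using assms by (intro has_integral_powr_to_inf) auto
  then have "(\<integral>\<^sup>+y. ennreal (y powr (-\<alpha>)) * indicator {w..} y \<partial>lborel) = ennreal (-(w powr (-\<alpha> + 1)) / (-\<alpha> + 1))"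
    by (rule nn_integral_has_integral_lebesgue'[rotated]) auto
  also have "-(w powr (-\<alpha> + 1)) / (-\<alpha> + 1) = w powr (1 - \<alpha>) / (\<alpha> - 1)"
    using assms by (simp add: field_simps)
  finally show ?thesis .
qed

definition taylor_tail_const :: "real \<Rightarrow> real \<Rightarrow> real" where
  "taylor_tail_const \<alpha> \<nu> = \<bar>\<nu>\<bar> * \<bar>\<nu> - 1\<bar> / (\<alpha> - 1) * Beta (2 - \<alpha>) (\<alpha> - \<nu>)"

lemma curv_sign_mult_taylor_tail_const:
  fixes \<alpha> \<nu> :: real
  assumes \<alpha>: "1 < \<alpha>" "\<alpha> < 2" and \<nu>: "\<nu> < \<alpha>"
  shows "curv_sign \<nu> * taylor_tail_const \<alpha> \<nu> = \<nu> * kappa0 \<alpha> \<nu>"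
proof -
  have "1 - \<alpha> \<notin> \<int>\<^sub>\<le>\<^sub>0"
  proof
    assume "1 - \<alpha> \<in> \<int>\<^sub>\<le>\<^sub>0"
    then obtain n :: int where "1 - \<alpha> = of_int n" by (auto elim!: nonpos_Ints_cases)
    with \<alpha> have "-1 < n" "n < 0" by linarith+
    then show False by linarith
  qed
  from Gamma_plus1[OF this] have G: "Gamma (2 - \<alpha>) = (1 - \<alpha>) * Gamma (1 - \<alpha>)"
    by (simp add: algebra_simps)
  have S: "curv_sign \<nu> * (\<bar>\<nu>\<bar> * \<bar>\<nu> - 1\<bar>) = \<nu> * (\<nu> - 1)"
    by (auto simp: curv_sign_def abs_mult[symmetric])
  have "curv_sign \<nu> * taylor_tail_const \<alpha> \<nu>
      = (curv_sign \<nu> * (\<bar>\<nu>\<bar> * \<bar>\<nu> - 1\<bar>)) / (\<alpha> - 1) * (Gamma (2 - \<alpha>) * Gamma (\<alpha> - \<nu>) / Gamma (2 - \<nu>))"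
    by (simp add: taylor_tail_const_def Beta_def)
  also have "\<dots> = \<nu> * (\<nu> - 1) / (\<alpha> - 1) * ((1 - \<alpha>) * Gamma (1 - \<alpha>) * Gamma (\<alpha> - \<nu>) / Gamma (2 - \<nu>))"
    unfolding S G ..
  also have "\<dots> = \<nu> * kappa0 \<alpha> \<nu>"
  proof -
    have "Gamma (2 - \<nu>) > 0" using \<alpha> \<nu> by (intro Gamma_real_pos) simp
    then show ?thesis using \<alpha> by (simp add: kappa0_def field_simps)
  qed
  finally show ?thesis .
qed

lemma taylor_tail_const_nonneg:
  assumes "1 < \<alpha>" "\<alpha> < 2" "\<nu> < \<alpha>"
  shows "taylor_tail_const \<alpha> \<nu> \<ge> 0"
  using assms by (auto simp: taylor_tail_const_def Beta_def intro!: Gamma_real_pos less_imp_le)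

lemma nn_integral_powr_taylor_rem_deriv:
  fixes x \<alpha> \<nu> :: real
  assumes x: "x > 0" and \<alpha>: "1 < \<alpha>" "\<alpha> < 2" and \<nu>: "\<nu> < \<alpha>"
  shows "(\<integral>\<^sup>+y. ennreal (\<bar>powr_taylor_rem_deriv \<nu> x y\<bar> * y powr (-\<alpha>)) * indicator {0<..} y \<partial>lborel)
       = ennreal (taylor_tail_const \<alpha> \<nu> * x powr (\<nu> - \<alpha>))"
proof -
  define C where "C = \<bar>\<nu>\<bar> * \<bar>\<nu> - 1\<bar>"
  have C: "C \<ge> 0" by (simp add: C_def)
  define F where "F w y = ennreal (indicator {(w, y). 0 \<le> w \<and> w \<le> y \<and> 0 < y} (w, y)
                                  * (C * (x + w) powr (\<nu> - 2)) * y powr (-\<alpha>))" for w y :: real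
  have inner_w: "ennreal (\<bar>powr_taylor_rem_deriv \<nu> x y\<bar> * y powr (-\<alpha>)) * indicator {0<..} y
      = (\<integral>\<^sup>+w. F w y \<partial>lborel)" for y
  proof (cases "y > 0")
    case True
    have "(\<integral>\<^sup>+w. F w y \<partial>lborel)
        = (\<integral>\<^sup>+w. ennreal (C * (x + w) powr (\<nu> - 2)) * indicator {0..y} w \<partial>lborel) * ennreal (y powr (-\<alpha>))"
      using True x C
      by (subst nn_integral_multc[symmetric]) (auto simp: F_def indicator_def ennreal_mult' intro!: nn_integral_cong)
    also have "\<dots> = ennreal (\<bar>powr_taylor_rem_deriv \<nu> x y\<bar> * y powr (-\<alpha>))"
      using abs_powr_taylor_rem_deriv_has_integral[OF x, of y \<nu>] True C
      by (subst nn_integral_has_integral_lebesgue') (auto simp: C_def ennreal_mult')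
    finally show ?thesis using True by simp
  qed (simp add: F_def indicator_def)
  have inner_y: "(\<integral>\<^sup>+y. F w y \<partial>lborel)
      = ennreal (C / (\<alpha> - 1)) * ennreal (indicator {0<..} w * (w powr (1 - \<alpha>) * (x + w) powr (\<nu> - 2)))"
    if "w \<noteq> 0" for w
  proof (cases "w > 0")
    case True
    have "(\<integral>\<^sup>+y. F w y \<partial>lborel)
        = ennreal (C * (x + w) powr (\<nu> - 2)) * (\<integral>\<^sup>+y. ennreal (y powr (-\<alpha>)) * indicator {w..} y \<partial>lborel)"
      using True x C
      by (subst nn_integral_cmult[symmetric]) (auto simp: F_def indicator_def ennreal_mult' intro!: nn_integral_cong)
    also have "\<dots> = ennreal (C * (x + w) powr (\<nu> - 2)) * ennreal (w powr (1 - \<alpha>) / (\<alpha> - 1))"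
      using nn_integral_powr_tail[OF True \<alpha>(1)] by simp
    finally show ?thesis
      using True C \<alpha> x by (simp add: ennreal_mult'[symmetric] field_simps)
  next
    case False
    with that have "w < 0" by simp
    then show ?thesis by (simp add: F_def indicator_def)
  qed
  have "(\<integral>\<^sup>+y. ennreal (\<bar>powr_taylor_rem_deriv \<nu> x y\<bar> * y powr (-\<alpha>)) * indicator {0<..} y \<partial>lborel)
      = (\<integral>\<^sup>+w. (\<integral>\<^sup>+y. F w y \<partial>lborel) \<partial>lborel)"
    unfolding inner_w F_def
    by (subst lborel_pair.Fubini') (auto simp: case_prod_unfold indicator_def cong: measurable_cong_sets)
  also have "\<dots> = ennreal (C / (\<alpha> - 1)) * (\<integral>\<^sup>+w. ennreal (indicator {0<..} w
                       * (w powr (1 - \<alpha>) * (x + w) powr (\<nu> - 2))) \<partial>lborel)"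
    by (subst nn_integral_cmult[symmetric])
       (auto intro!: nn_integral_cong_AE eventually_mono[OF AE_lborel_singleton[of 0]] inner_y)
  also have "(\<integral>\<^sup>+w. ennreal (indicator {0<..} w * (w powr (1 - \<alpha>) * (x + w) powr (\<nu> - 2))) \<partial>lborel)
      = ennreal (x powr (\<nu> - \<alpha>) * Beta (2 - \<alpha>) (\<alpha> - \<nu>))"
    using Beta_integral_shifted[of "2 - \<alpha>" "\<alpha> - \<nu>" x] \<alpha> \<nu> x
    by (subst nn_integral_eq_integral)
       (auto simp: set_integrable_def set_lebesgue_integral_def indicator_def)
  finally show ?thesis using C \<alpha> by (simp add: C_def taylor_tail_const_def ennreal_mult'[symmetric] mult_ac)
qed

lemma nn_integral_layer_cake:
  fixes T :: "'a \<Rightarrow> real" and \<phi> :: "real \<Rightarrow> real"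
  assumes "sigma_finite_measure M"
    and [measurable]: "T \<in> borel_measurable M" "\<phi> \<in> borel_measurable borel"
  shows "(\<integral>\<^sup>+z. (\<integral>\<^sup>+y. ennreal (\<phi> y) * indicator {0<..<T z} y \<partial>lborel) \<partial>M)
       = (\<integral>\<^sup>+y. ennreal (\<phi> y) * indicator {0<..} y * emeasure M {z \<in> space M. y < T z} \<partial>lborel)"
proof -
  interpret pair_sigma_finite M lborel
    by (intro pair_sigma_finite.intro assms(1) lborel.sigma_finite_measure_axioms)
  have "(\<integral>\<^sup>+z. (\<integral>\<^sup>+y. ennreal (\<phi> y) * indicator {0<..<T z} y \<partial>lborel) \<partial>M)
      = (\<integral>\<^sup>+z. (\<integral>\<^sup>+y. ennreal (\<phi> y) * indicator {0<..} y * indicator {z \<in> space M. y < T z} z \<partial>lborel) \<partial>M)"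
    by (intro nn_integral_cong) (auto simp: indicator_def)
  also have "\<dots> = (\<integral>\<^sup>+y. (\<integral>\<^sup>+z. ennreal (\<phi> y) * indicator {0<..} y * indicator {z \<in> space M. y < T z} z \<partial>M) \<partial>lborel)"
    by (rule Fubini'[symmetric]) measurable
  also have "\<dots> = (\<integral>\<^sup>+y. ennreal (\<phi> y) * indicator {0<..} y * emeasure M {z \<in> space M. y < T z} \<partial>lborel)"
    by (intro nn_integral_cong nn_integral_cmult_indicator) measurable
  finally show ?thesis .
qed

lemma has_bochner_integral_powr_taylor_rem_deriv:
  assumes "x > 0" "1 < \<alpha>" "\<alpha> < 2" "\<nu> < \<alpha>"
  shows "has_bochner_integral lborel
           (\<lambda>y. \<bar>powr_taylor_rem_deriv \<nu> x y\<bar> * y powr (-\<alpha>) * indicator {0<..} y)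
           (taylor_tail_const \<alpha> \<nu> * x powr (\<nu> - \<alpha>))"
proof (rule has_bochner_integral_nn_integral)
  show "(\<integral>\<^sup>+y. ennreal (\<bar>powr_taylor_rem_deriv \<nu> x y\<bar> * y powr (-\<alpha>) * indicator {0<..} y) \<partial>lborel)
      = ennreal (taylor_tail_const \<alpha> \<nu> * x powr (\<nu> - \<alpha>))"
    using nn_integral_powr_taylor_rem_deriv[OF assms] by (simp add: indicator_mult_ennreal mult_ac)
  show "0 \<le> taylor_tail_const \<alpha> \<nu> * x powr (\<nu> - \<alpha>)"
    using taylor_tail_const_nonneg[OF assms(2-4)] by simp
qed (auto simp: powr_taylor_rem_deriv_def)

section \<open>Upward jumps\<close>

lemma has_bochner_integral_powr_near_zero:
  fixes Y c \<alpha> :: real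
  assumes Y: "Y > 0" and c: "c \<ge> 0" and \<alpha>: "\<alpha> < 2"
  shows "has_bochner_integral lborel (\<lambda>y. (y + c * y powr (1 - \<alpha>)) * indicator {0<..<Y} y)
           (Y\<^sup>2 / 2 + c * Y powr (2 - \<alpha>) / (2 - \<alpha>))"
proof (rule has_bochner_integral_nn_integral)
  have "((\<lambda>y. y powr 1 + c * y powr (1 - \<alpha>)) has_integral
          (Y powr (1 + 1) / (1 + 1) + c * (Y powr ((1 - \<alpha>) + 1) / ((1 - \<alpha>) + 1)))) {0..Y}"
    using Y \<alpha> by (intro has_integral_add has_integral_mult_right has_integral_powr_from_0) auto
  then have "((\<lambda>y. y powr 1 + c * y powr (1 - \<alpha>)) has_integral
          (Y powr (1 + 1) / (1 + 1) + c * (Y powr ((1 - \<alpha>) + 1) / ((1 - \<alpha>) + 1)))) {0<..<Y}"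
    by (simp only: has_integral_Icc_iff_Ioo)
  then have "((\<lambda>y. y + c * y powr (1 - \<alpha>)) has_integral
          (Y powr (1 + 1) / (1 + 1) + c * (Y powr ((1 - \<alpha>) + 1) / ((1 - \<alpha>) + 1)))) {0<..<Y}"
    by (rule has_integral_eq[rotated]) simp
  then have "((\<lambda>y. y + c * y powr (1 - \<alpha>)) has_integral (Y\<^sup>2 / 2 + c * Y powr (2 - \<alpha>) / (2 - \<alpha>))) {0<..<Y}"
    using Y by (simp add: powr_numeral add_ac)
  then show "(\<integral>\<^sup>+y. ennreal ((y + c * y powr (1 - \<alpha>)) * indicator {0<..<Y} y) \<partial>lborel)
      = ennreal (Y\<^sup>2 / 2 + c * Y powr (2 - \<alpha>) / (2 - \<alpha>))"
    using c by (subst nn_integral_has_integral_lebesgue'[symmetric]) (auto simp: indicator_mult_ennreal mult.commute)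
qed (use c \<alpha> in \<open>auto simp: indicator_def\<close>)

context
  fixes M :: "real measure" and x \<alpha> c \<nu> e Y :: real
  assumes sets_M: "sets M = sets borel" and prob_M: "prob_space M"
    and x_pos: "x > 0" and \<alpha>: "1 < \<alpha>" "\<alpha> < 2" and \<nu>: "\<nu> < \<alpha>"
    and c_pos: "c > 0" and Y_pos: "Y > 0" and e_pos: "e > 0"
    and tail: "\<And>y. y \<ge> Y \<Longrightarrow> \<bar>y powr \<alpha> * measure M {z. max (z - x) 0 > y} - c\<bar> \<le> e"
begin

definition jump_tail :: "real \<Rightarrow> real" where
  "jump_tail y = measure M {z. y < max (z - x) 0}"

lemma space_M: "space M = UNIV"
  using sets_eq_imp_space_eq[OF sets_M] by simp

lemma borel_measurable_M_iff: "f \<in> borel_measurable M \<longleftrightarrow> f \<in> borel_measurable borel"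
  by (simp add: measurable_cong_sets[OF sets_M refl])

lemma jump_tail_bounds: "0 \<le> jump_tail y" "jump_tail y \<le> 1"
  using prob_space.prob_le_1[OF prob_M] by (auto simp: jump_tail_def)

lemma borel_measurable_jump_tail [measurable]: "jump_tail \<in> borel_measurable borel"
proof -
  have "{z. y2 < max (z - x) 0} \<subseteq> {z. y1 < max (z - x) 0}" if "y1 \<le> y2" for y1 y2
    using that by auto
  then have "mono (\<lambda>y. - jump_tail y)"
    unfolding jump_tail_def mono_def
    by (auto intro!: finite_measure.finite_measure_mono prob_space.finite_measure[OF prob_M] simp: sets_M)
  then have "(\<lambda>y. - (- jump_tail y)) \<in> borel_measurable borel"
    by (intro borel_measurable_uminus borel_measurable_mono)
  then show ?thesis by simp
qed

lemma jump_tail_approx: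
  assumes "y \<ge> Y"
  shows "\<bar>jump_tail y - c * y powr (-\<alpha>)\<bar> \<le> e * y powr (-\<alpha>)"
proof -
  have y: "y > 0" using assms Y_pos by simp
  have "jump_tail y - c * y powr (-\<alpha>) = y powr (-\<alpha>) * (y powr \<alpha> * jump_tail y - c)"
    using y by (simp add: algebra_simps flip: powr_add)
  also have "\<bar>\<dots>\<bar> \<le> y powr (-\<alpha>) * e"
    using tail[OF assms] by (simp add: abs_mult jump_tail_def mult_left_mono)
  finally show ?thesis by (simp add: mult.commute)
qed

lemma nn_integral_layer_cake_jump:
  assumes "\<phi> \<in> borel_measurable borel"
  shows "(\<integral>\<^sup>+z. (\<integral>\<^sup>+y. ennreal (\<phi> y) * indicator {0<..<max (z - x) 0} y \<partial>lborel) \<partial>M)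
       = (\<integral>\<^sup>+y. ennreal (\<phi> y) * indicator {0<..} y * ennreal (jump_tail y) \<partial>lborel)"
proof -
  interpret prob_space M by (rule prob_M)
  have "(\<lambda>z. max (z - x) 0) \<in> borel_measurable M" by (simp add: borel_measurable_M_iff)
  from nn_integral_layer_cake[OF sigma_finite_measure_axioms this assms] show ?thesis
    by (simp add: space_M jump_tail_def emeasure_eq_measure)
qed

lemma integrable_pos_jump: "integrable M (\<lambda>z. max (z - x) 0)"
proof (rule integrableI_nonneg)
  have "(\<integral>\<^sup>+y. ennreal (jump_tail y) * indicator {0<..} y \<partial>lborel)
     \<le> (\<integral>\<^sup>+y. indicator {0<..<Y} y + ennreal (c + e) * (ennreal (y powr (-\<alpha>)) * indicator {Y..} y) \<partial>lborel)"
  proof (intro nn_integral_mono)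
    fix y :: real
    consider "y \<le> 0" | "0 < y" "y < Y" | "Y \<le> y" by linarith
    then show "ennreal (jump_tail y) * indicator {0<..} y
      \<le> indicator {0<..<Y} y + ennreal (c + e) * (ennreal (y powr (-\<alpha>)) * indicator {Y..} y)"
    proof cases
      case 3
      then have "jump_tail y \<le> (c + e) * y powr (-\<alpha>)"
        using jump_tail_approx[of y] by (simp add: abs_le_iff algebra_simps)
      then have "ennreal (jump_tail y) \<le> ennreal ((c + e) * y powr (-\<alpha>))"
        by (rule ennreal_leI)
      also have "\<dots> = ennreal (c + e) * ennreal (y powr (-\<alpha>))"
        using c_pos e_pos by (intro ennreal_mult) auto
      finally show ?thesis
        using 3 Y_pos by simp
    qed (use jump_tail_bounds in auto)
  qed
  also have "\<dots> = ennreal Y + ennreal (c + e) * ennreal (Y powr (1 - \<alpha>) / (\<alpha> - 1))"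
    using nn_integral_powr_tail[OF Y_pos \<alpha>(1)] Y_pos
    by (subst nn_integral_add) (auto simp: nn_integral_cmult)
  finally have "(\<integral>\<^sup>+y. ennreal (jump_tail y) * indicator {0<..} y \<partial>lborel) < \<infinity>"
    by (simp add: ennreal_mult_less_top order_le_less_trans)
  then show "(\<integral>\<^sup>+z. ennreal (max (z - x) 0) \<partial>M) < \<infinity>"
    using nn_integral_layer_cake_jump[of "\<lambda>_. 1"] by (simp add: mult.commute)
qed (auto simp: borel_measurable_M_iff)

lemma taylor_rem_deriv_tail_error_le:
  assumes y: "y > 0"
  shows "\<bar>powr_taylor_rem_deriv \<nu> x y\<bar> * \<bar>jump_tail y - c * y powr (-\<alpha>)\<bar>
           \<le> e * (\<bar>powr_taylor_rem_deriv \<nu> x y\<bar> * y powr (-\<alpha>))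
             + \<bar>\<nu>\<bar> * \<bar>\<nu> - 1\<bar> * x powr (\<nu> - 2) * ((y + c * y powr (1 - \<alpha>)) * indicator {0<..<Y} y)"
proof (cases "y < Y")
  case True
  define K where "K = \<bar>\<nu>\<bar> * \<bar>\<nu> - 1\<bar> * x powr (\<nu> - 2)"
  have "\<bar>powr_taylor_rem_deriv \<nu> x y\<bar> \<le> K * y"
    unfolding K_def using x_pos y \<nu> \<alpha> by (intro abs_powr_taylor_rem_deriv_le) auto
  moreover have "\<bar>jump_tail y - c * y powr (-\<alpha>)\<bar> \<le> 1 + c * y powr (-\<alpha>)"
    using jump_tail_bounds[of y] c_pos powr_ge_zero[of y "-\<alpha>"] mult_nonneg_nonneg[of c "y powr (-\<alpha>)"]
    unfolding abs_le_iff by linarith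
  ultimately have "\<bar>powr_taylor_rem_deriv \<nu> x y\<bar> * \<bar>jump_tail y - c * y powr (-\<alpha>)\<bar>
      \<le> K * y * (1 + c * y powr (-\<alpha>))"
    using y by (simp add: mult_mono)
  also have "\<dots> = K * ((y + c * y powr (1 - \<alpha>)) * indicator {0<..<Y} y)"
    using y True by (simp add: algebra_simps powr_diff powr_minus_divide)
  moreover have "0 \<le> e * (\<bar>powr_taylor_rem_deriv \<nu> x y\<bar> * y powr (-\<alpha>))" using e_pos by simp
  ultimately show ?thesis unfolding K_def by linarith
next
  case False
  then have "\<bar>powr_taylor_rem_deriv \<nu> x y\<bar> * \<bar>jump_tail y - c * y powr (-\<alpha>)\<bar>
      \<le> \<bar>powr_taylor_rem_deriv \<nu> x y\<bar> * (e * y powr (-\<alpha>))"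
    using jump_tail_approx[of y] by (simp add: mult_left_mono)
  then show ?thesis using False by (simp add: mult_ac)
qed

lemma integral_taylor_rem_deriv_tail_error:
  defines "err \<equiv> \<lambda>y. \<bar>powr_taylor_rem_deriv \<nu> x y\<bar> * \<bar>jump_tail y - c * y powr (-\<alpha>)\<bar> * indicator {0<..} y"
  shows "integrable lborel err"
    and "integral\<^sup>L lborel err \<le> e * taylor_tail_const \<alpha> \<nu> * x powr (\<nu> - \<alpha>)
           + \<bar>\<nu>\<bar> * \<bar>\<nu> - 1\<bar> * (Y\<^sup>2 / 2 + c * Y powr (2 - \<alpha>) / (2 - \<alpha>)) * x powr (\<nu> - 2)"
proof -
  define K where "K = \<bar>\<nu>\<bar> * \<bar>\<nu> - 1\<bar> * x powr (\<nu> - 2)"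
  define near where "near y = (y + c * y powr (1 - \<alpha>)) * indicator {0<..<Y} y" for y
  define far where "far y = \<bar>powr_taylor_rem_deriv \<nu> x y\<bar> * y powr (-\<alpha>) * indicator {0<..} y" for y
  have far: "has_bochner_integral lborel far (taylor_tail_const \<alpha> \<nu> * x powr (\<nu> - \<alpha>))"
    unfolding far_def using has_bochner_integral_powr_taylor_rem_deriv x_pos \<alpha> \<nu> by blast
  have near: "has_bochner_integral lborel near (Y\<^sup>2 / 2 + c * Y powr (2 - \<alpha>) / (2 - \<alpha>))"
    unfolding near_def using Y_pos c_pos \<alpha> by (intro has_bochner_integral_powr_near_zero) auto
  have dom_int: "integrable lborel (\<lambda>y. e * far y + K * near y)"
    using far near by (auto simp: has_bochner_integral_iff)
  have bound: "norm (err y) \<le> e * far y + K * near y" for y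
    using taylor_rem_deriv_tail_error_le[of y]
    by (cases "y > 0") (simp_all add: err_def far_def near_def K_def)
  have [measurable]: "err \<in> borel_measurable lborel"
    unfolding err_def powr_taylor_rem_deriv_def by measurable
  show err_int: "integrable lborel err"
  proof (rule Bochner_Integration.integrable_bound[OF dom_int])
    show "AE y in lborel. norm (err y) \<le> norm (e * far y + K * near y)"
      using bound by (intro AE_I2) (metis abs_ge_self order_trans real_norm_def)
  qed simp
  have "integral\<^sup>L lborel err \<le> (\<integral>y. e * far y + K * near y \<partial>lborel)"
    using err_int dom_int bound by (intro integral_mono) (auto simp: err_def)
  also have "\<dots> = e * taylor_tail_const \<alpha> \<nu> * x powr (\<nu> - \<alpha>)
           + \<bar>\<nu>\<bar> * \<bar>\<nu> - 1\<bar> * (Y\<^sup>2 / 2 + c * Y powr (2 - \<alpha>) / (2 - \<alpha>)) * x powr (\<nu> - 2)"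
    using far near by (simp add: has_bochner_integral_iff K_def mult_ac)
  finally show "integral\<^sup>L lborel err \<le> \<dots>" .
qed

lemma nn_integral_abs_taylor_rem_jump:
  "(\<integral>\<^sup>+z. ennreal \<bar>powr_taylor_rem \<nu> x (max (z - x) 0)\<bar> \<partial>M)
     = (\<integral>\<^sup>+y. ennreal (\<bar>powr_taylor_rem_deriv \<nu> x y\<bar> * jump_tail y * indicator {0<..} y) \<partial>lborel)"
proof -
  have inner: "ennreal \<bar>powr_taylor_rem \<nu> x t\<bar>
      = (\<integral>\<^sup>+y. ennreal \<bar>powr_taylor_rem_deriv \<nu> x y\<bar> * indicator {0<..<t} y \<partial>lborel)" if "t \<ge> 0" for t
    using powr_taylor_rem_abs_has_integral[OF x_pos that]
    by (intro nn_integral_has_integral_lebesgue'[symmetric]) (auto simp: has_integral_Icc_iff_Ioo)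
  have "(\<lambda>y. \<bar>powr_taylor_rem_deriv \<nu> x y\<bar>) \<in> borel_measurable borel"
    unfolding powr_taylor_rem_deriv_def by measurable
  from nn_integral_layer_cake_jump[OF this] show ?thesis
    using jump_tail_bounds by (simp add: inner ennreal_mult' indicator_mult_ennreal mult_ac)
qed

lemma integral_taylor_rem_deriv_jump_tail:
  defines "h \<equiv> \<lambda>y. \<bar>powr_taylor_rem_deriv \<nu> x y\<bar> * jump_tail y * indicator {0<..} y"
  shows "integrable lborel h"
    and "\<bar>integral\<^sup>L lborel h - c * (taylor_tail_const \<alpha> \<nu> * x powr (\<nu> - \<alpha>))\<bar>
           \<le> e * taylor_tail_const \<alpha> \<nu> * x powr (\<nu> - \<alpha>)
             + \<bar>\<nu>\<bar> * \<bar>\<nu> - 1\<bar> * (Y\<^sup>2 / 2 + c * Y powr (2 - \<alpha>) / (2 - \<alpha>)) * x powr (\<nu> - 2)"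
proof -
  define far where "far y = \<bar>powr_taylor_rem_deriv \<nu> x y\<bar> * y powr (-\<alpha>) * indicator {0<..} y" for y
  define err where "err y = \<bar>powr_taylor_rem_deriv \<nu> x y\<bar> * \<bar>jump_tail y - c * y powr (-\<alpha>)\<bar> * indicator {0<..} y" for y
  have far: "has_bochner_integral lborel far (taylor_tail_const \<alpha> \<nu> * x powr (\<nu> - \<alpha>))"
    unfolding far_def using has_bochner_integral_powr_taylor_rem_deriv x_pos \<alpha> \<nu> by blast
  have err: "integrable lborel err" "integral\<^sup>L lborel err \<le> e * taylor_tail_const \<alpha> \<nu> * x powr (\<nu> - \<alpha>)
           + \<bar>\<nu>\<bar> * \<bar>\<nu> - 1\<bar> * (Y\<^sup>2 / 2 + c * Y powr (2 - \<alpha>) / (2 - \<alpha>)) * x powr (\<nu> - 2)"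
    using integral_taylor_rem_deriv_tail_error unfolding err_def[abs_def] by blast+
  have diff: "\<bar>h y - c * far y\<bar> = err y" for y
  proof -
    have "h y - c * far y = \<bar>powr_taylor_rem_deriv \<nu> x y\<bar> * (jump_tail y - c * y powr (-\<alpha>)) * indicator {0<..} y"
      by (simp add: h_def far_def algebra_simps)
    then show ?thesis by (simp add: err_def abs_mult)
  qed
  have [measurable]: "h \<in> borel_measurable borel" "far \<in> borel_measurable borel"
    unfolding h_def far_def powr_taylor_rem_deriv_def by measurable
  have diff_int: "integrable lborel (\<lambda>y. h y - c * far y)"
    by (rule Bochner_Integration.integrable_bound[OF err(1)]) (auto simp: diff)
  have "integrable lborel (\<lambda>y. c * far y)"
    using far by (simp add: has_bochner_integral_iff)
  from Bochner_Integration.integrable_add[OF diff_int this] show h_int: "integrable lborel h"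
    by simp
  have "\<bar>integral\<^sup>L lborel h - c * (taylor_tail_const \<alpha> \<nu> * x powr (\<nu> - \<alpha>))\<bar>
      = \<bar>\<integral>y. h y - c * far y \<partial>lborel\<bar>"
    using h_int far by (simp add: has_bochner_integral_iff)
  also have "\<dots> \<le> integral\<^sup>L lborel err"
    using integral_abs_bound[of lborel "\<lambda>y. h y - c * far y"] by (simp add: diff)
  finally show "\<bar>integral\<^sup>L lborel h - c * (taylor_tail_const \<alpha> \<nu> * x powr (\<nu> - \<alpha>))\<bar>
           \<le> e * taylor_tail_const \<alpha> \<nu> * x powr (\<nu> - \<alpha>)
             + \<bar>\<nu>\<bar> * \<bar>\<nu> - 1\<bar> * (Y\<^sup>2 / 2 + c * Y powr (2 - \<alpha>) / (2 - \<alpha>)) * x powr (\<nu> - 2)"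
    using err(2) by linarith
qed

lemma taylor_rem_jump_estimate:
  shows "integrable M (\<lambda>z. powr_taylor_rem \<nu> x (max (z - x) 0))"
    and "\<bar>(\<integral>z. powr_taylor_rem \<nu> x (max (z - x) 0) \<partial>M) - c * \<nu> * x powr (\<nu> - \<alpha>) * kappa0 \<alpha> \<nu>\<bar>
           \<le> e * taylor_tail_const \<alpha> \<nu> * x powr (\<nu> - \<alpha>)
             + \<bar>\<nu>\<bar> * \<bar>\<nu> - 1\<bar> * (Y\<^sup>2 / 2 + c * Y powr (2 - \<alpha>) / (2 - \<alpha>)) * x powr (\<nu> - 2)"
proof -
  interpret prob_space M by (rule prob_M)
  define g where "g z = powr_taylor_rem \<nu> x (max (z - x) 0)" for z
  define h where "h = (\<lambda>y. \<bar>powr_taylor_rem_deriv \<nu> x y\<bar> * jump_tail y * indicator {0<..} y)"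
  note h = integral_taylor_rem_deriv_jump_tail[folded h_def]
  have g_meas [measurable]: "g \<in> borel_measurable M"
    unfolding g_def powr_taylor_rem_def borel_measurable_M_iff by measurable
  \<comment> \<open>the remainder has the constant sign \<open>curv_sign \<nu>\<close>, so its absolute value is computed by the layer-cake formula\<close>
  have "(\<integral>\<^sup>+z. ennreal \<bar>g z\<bar> \<partial>M) = ennreal (integral\<^sup>L lborel h)"
    using nn_integral_abs_taylor_rem_jump nn_integral_eq_integral[OF h(1)] jump_tail_bounds
    by (simp add: g_def h_def)
  then have abs_g: "has_bochner_integral M (\<lambda>z. \<bar>g z\<bar>) (integral\<^sup>L lborel h)"
    using jump_tail_bounds by (intro has_bochner_integral_nn_integral) (auto simp: h_def intro!: integral_nonneg_AE)
  have g_eq: "g z = curv_sign \<nu> * \<bar>g z\<bar>" for z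
    using powr_taylor_rem_sign[OF x_pos, of "max (z - x) 0" \<nu>] by (simp add: g_def)
  have g_int: "has_bochner_integral M g (curv_sign \<nu> * integral\<^sup>L lborel h)"
    using has_bochner_integral_mult_right[OF abs_g, of "curv_sign \<nu>"] by (simp only: g_eq[symmetric])
  then show "integrable M (\<lambda>z. powr_taylor_rem \<nu> x (max (z - x) 0))"
    by (simp add: g_def[abs_def] has_bochner_integral_iff)
  have target: "c * \<nu> * x powr (\<nu> - \<alpha>) * kappa0 \<alpha> \<nu>
      = curv_sign \<nu> * (c * (taylor_tail_const \<alpha> \<nu> * x powr (\<nu> - \<alpha>)))"
    using curv_sign_mult_taylor_tail_const[OF \<alpha> \<nu>] by (simp add: mult_ac)
  have "\<bar>(\<integral>z. powr_taylor_rem \<nu> x (max (z - x) 0) \<partial>M) - c * \<nu> * x powr (\<nu> - \<alpha>) * kappa0 \<alpha> \<nu>\<bar>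
      = \<bar>integral\<^sup>L lborel h - c * (taylor_tail_const \<alpha> \<nu> * x powr (\<nu> - \<alpha>))\<bar>"
    using g_int unfolding target g_def[abs_def]
    by (simp add: has_bochner_integral_iff abs_mult flip: right_diff_distrib)
  with h(2) show "\<bar>(\<integral>z. powr_taylor_rem \<nu> x (max (z - x) 0) \<partial>M) - c * \<nu> * x powr (\<nu> - \<alpha>) * kappa0 \<alpha> \<nu>\<bar>
           \<le> e * taylor_tail_const \<alpha> \<nu> * x powr (\<nu> - \<alpha>)
             + \<bar>\<nu>\<bar> * \<bar>\<nu> - 1\<bar> * (Y\<^sup>2 / 2 + c * Y powr (2 - \<alpha>) / (2 - \<alpha>)) * x powr (\<nu> - 2)"
    by simp
qed

end

section \<open>Downward jumps\<close>

lemma powr_le_1_plus_powr: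
  fixes s \<gamma> \<beta> :: real
  assumes "s \<ge> 0" "0 \<le> \<gamma>" "\<gamma> \<le> \<beta>"
  shows "s powr \<gamma> \<le> 1 + s powr \<beta>"
proof (cases "s \<le> 1")
  case True
  then have "s powr \<gamma> \<le> 1"
    using assms by (cases "s = 0") (auto intro: powr_le1)
  then show ?thesis by (smt (verit) powr_ge_zero)
next
  case False
  then show ?thesis using assms powr_mono[of \<gamma> \<beta> s] by (smt (verit) powr_ge_zero)
qed

lemma f0_taylor_near_le:
  assumes x: "x \<ge> 2" and z: "x/2 \<le> z" "z \<le> x" and \<nu>: "\<nu> \<le> 2"
    and \<gamma>: "0 \<le> \<gamma>" "\<gamma> \<le> 2" "\<gamma> \<le> \<beta>"
  shows "\<bar>f0 \<nu> z - x powr \<nu> - \<nu> * x powr (\<nu> - 1) * (z - x)\<bar>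
           \<le> \<bar>\<nu>\<bar> * \<bar>\<nu> - 1\<bar> * 2 powr (2 - \<nu>) * x powr (\<nu> - \<gamma>) * (1 + (x - z) powr \<beta>)"
proof -
  have "\<bar>f0 \<nu> z - x powr \<nu> - \<nu> * x powr (\<nu> - 1) * (z - x)\<bar> = \<bar>powr_taylor_rem \<nu> x (z - x)\<bar>"
    using z x by (simp add: f0_def powr_taylor_rem_def)
  also have "\<dots> \<le> \<bar>\<nu>\<bar> * \<bar>\<nu> - 1\<bar> * (x/2) powr (\<nu> - 2) * (z - x)\<^sup>2"
    using x z \<nu> by (intro abs_powr_taylor_rem_le_square) auto
  also have "(x/2) powr (\<nu> - 2) = 2 powr (2 - \<nu>) * x powr (\<nu> - 2)"
    using x by (simp add: powr_divide powr_diff)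
  also have "\<bar>\<nu>\<bar> * \<bar>\<nu> - 1\<bar> * (2 powr (2 - \<nu>) * x powr (\<nu> - 2)) * (z - x)\<^sup>2
      \<le> \<bar>\<nu>\<bar> * \<bar>\<nu> - 1\<bar> * (2 powr (2 - \<nu>) * x powr (\<nu> - 2)) * (x powr (2 - \<gamma>) * (1 + (x - z) powr \<beta>))"
  proof (rule mult_left_mono)
    have "(z - x)\<^sup>2 = (x - z) powr \<gamma> * (x - z) powr (2 - \<gamma>)" if "z < x"
      using that by (simp add: power2_commute powr_numeral flip: powr_add)
    moreover have "(x - z) powr (2 - \<gamma>) \<le> x powr (2 - \<gamma>)"
      using x z \<gamma> by (intro powr_mono2) auto
    moreover have "(x - z) powr \<gamma> \<le> 1 + (x - z) powr \<beta>"
      using z \<gamma> by (intro powr_le_1_plus_powr) auto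
    ultimately show "(z - x)\<^sup>2 \<le> x powr (2 - \<gamma>) * (1 + (x - z) powr \<beta>)"
      using z by (cases "z = x") (auto simp: mult_mono mult.commute)
  qed simp
  also have "\<dots> = \<bar>\<nu>\<bar> * \<bar>\<nu> - 1\<bar> * 2 powr (2 - \<nu>) * (x powr (\<nu> - 2) * x powr (2 - \<gamma>)) * (1 + (x - z) powr \<beta>)"
    by (simp only: mult_ac)
  also have "x powr (\<nu> - 2) * x powr (2 - \<gamma>) = x powr (\<nu> - \<gamma>)"
    by (simp flip: powr_add)
  finally show ?thesis .
qed

lemma abs_f0_le:
  assumes z: "0 \<le> z" "z \<le> x"
  shows "\<bar>f0 \<nu> z\<bar> \<le> 1 + x powr \<nu>"
proof (cases "z \<ge> 1")
  case True
  have "z powr \<nu> \<le> max (x powr \<nu>) 1"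
  proof (cases "\<nu> \<ge> 0")
    case True
    then show ?thesis using z \<open>z \<ge> 1\<close> powr_mono2[of \<nu> z x] by simp
  next
    case False
    then show ?thesis using \<open>z \<ge> 1\<close> powr_mono[of \<nu> 0 z] by simp
  qed
  moreover have "max (x powr \<nu>) 1 \<le> 1 + x powr \<nu>"
    using powr_ge_zero[of x \<nu>] by (intro max.boundedI) linarith+
  moreover have "f0 \<nu> z = z powr \<nu>" using True by (simp add: f0_def)
  ultimately show ?thesis using powr_ge_zero[of z \<nu>] by linarith
qed (simp add: f0_def)

lemma f0_taylor_far_le:
  assumes x: "x > 0" and z: "0 \<le> z" "z < x/2" and \<beta>: "\<beta> \<ge> 0"
  shows "\<bar>f0 \<nu> z - x powr \<nu> - \<nu> * x powr (\<nu> - 1) * (z - x)\<bar>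
           \<le> 2 powr \<beta> * (2 + \<bar>\<nu>\<bar>) * (x powr (-\<beta>) + x powr (\<nu> - \<beta>)) * (x - z) powr \<beta>"
proof -
  have f0_le: "\<bar>f0 \<nu> z\<bar> \<le> 1 + x powr \<nu>"
    using z by (intro abs_f0_le) auto
  have lin_le: "\<bar>\<nu> * x powr (\<nu> - 1) * (z - x)\<bar> \<le> \<bar>\<nu>\<bar> * x powr \<nu>"
  proof -
    have "\<bar>\<nu> * x powr (\<nu> - 1) * (z - x)\<bar> = \<bar>\<nu>\<bar> * (x powr (\<nu> - 1) * (x - z))"
      using z by (simp add: abs_mult)
    also have "\<dots> \<le> \<bar>\<nu>\<bar> * (x powr (\<nu> - 1) * x)"
      using z by (intro mult_left_mono) auto
    also have "x powr (\<nu> - 1) * x = x powr \<nu>"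
      using x by (simp add: powr_diff)
    finally show ?thesis .
  qed
  have "\<bar>f0 \<nu> z - x powr \<nu> - \<nu> * x powr (\<nu> - 1) * (z - x)\<bar> \<le> 1 + (2 + \<bar>\<nu>\<bar>) * x powr \<nu>"
  proof -
    have "\<bar>a - b - d\<bar> \<le> \<bar>a\<bar> + b + \<bar>d\<bar>" if "0 \<le> b" for a b d :: real
      using that by linarith
    from this[OF powr_ge_zero, of "f0 \<nu> z" x \<nu> "\<nu> * x powr (\<nu> - 1) * (z - x)"] show ?thesis
      using f0_le lin_le by (simp add: algebra_simps)
  qed
  also have "\<dots> \<le> (1 + (2 + \<bar>\<nu>\<bar>) * x powr \<nu>) * (2 powr \<beta> * x powr (-\<beta>) * (x - z) powr \<beta>)"
  proof -
    have "x powr \<beta> \<le> (2 * (x - z)) powr \<beta>"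
      using x z \<beta> by (intro powr_mono2) auto
    also have "\<dots> = 2 powr \<beta> * (x - z) powr \<beta>"
      using z x powr_mult[of 2 "x - z" \<beta>] by simp
    finally have "x powr (-\<beta>) * x powr \<beta> \<le> x powr (-\<beta>) * (2 powr \<beta> * (x - z) powr \<beta>)"
      by (rule mult_left_mono) simp
    then have "1 \<le> 2 powr \<beta> * x powr (-\<beta>) * (x - z) powr \<beta>"
      using x by (simp add: mult_ac flip: powr_add)
    moreover have "0 \<le> 1 + (2 + \<bar>\<nu>\<bar>) * x powr \<nu>" by simp
    ultimately show ?thesis using mult_left_mono[of 1] by fastforce
  qed
  also have "\<dots> = 2 powr \<beta> * (x powr (-\<beta>) + (2 + \<bar>\<nu>\<bar>) * x powr (\<nu> - \<beta>)) * (x - z) powr \<beta>"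
    by (simp add: algebra_simps powr_diff powr_minus_divide)
  also have "\<dots> \<le> 2 powr \<beta> * (2 + \<bar>\<nu>\<bar>) * (x powr (-\<beta>) + x powr (\<nu> - \<beta>)) * (x - z) powr \<beta>"
    by (intro mult_right_mono) (auto simp: algebra_simps)
  finally show ?thesis .
qed

lemma f0_taylor_neg_jump_le:
  assumes x: "x \<ge> 2" and z: "0 \<le> z" "z < x" and \<nu>: "\<nu> \<le> 2" and \<beta>: "\<beta> > 0"
  shows "\<bar>f0 \<nu> z - x powr \<nu> - \<nu> * x powr (\<nu> - 1) * (z - x)\<bar>
           \<le> (\<bar>\<nu>\<bar> * \<bar>\<nu> - 1\<bar> * 2 powr (2 - \<nu>) + 2 * (2 powr \<beta> * (2 + \<bar>\<nu>\<bar>)))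
             * x powr (max (\<nu> - min \<beta> 2) (-\<beta>)) * (1 + (x - z) powr \<beta>)"
    (is "?L \<le> (?C1 + 2 * ?C2) * x powr ?p * ?R")
proof -
  have le_p: "x powr a \<le> x powr ?p" if "a \<le> ?p" for a
    using x that by (intro powr_mono) auto
  have R: "1 \<le> ?R" "(x - z) powr \<beta> \<le> ?R" by auto
  have "?L \<le> ?C1 * x powr ?p * ?R"
    if "x/2 \<le> z"
  proof -
    have "?L \<le> ?C1 * x powr (\<nu> - min \<beta> 2) * ?R"
      using x z that \<nu> \<beta> by (intro f0_taylor_near_le) auto
    also have "\<dots> \<le> ?C1 * x powr ?p * ?R"
      using R le_p[of "\<nu> - min \<beta> 2"] by (intro mult_right_mono mult_left_mono) auto
    finally show ?thesis .
  qed
  moreover have "?L \<le> ?C2 * (2 * x powr ?p) * ?R"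
    if "z < x/2"
  proof -
    have "?L \<le> ?C2 * (x powr (-\<beta>) + x powr (\<nu> - \<beta>)) * (x - z) powr \<beta>"
      using x z that \<beta> by (intro f0_taylor_far_le) auto
    also have "\<dots> \<le> ?C2 * (2 * x powr ?p) * ?R"
    proof (intro mult_mono mult_left_mono)
      have "\<nu> - \<beta> \<le> ?p" by auto
      then show "x powr (-\<beta>) + x powr (\<nu> - \<beta>) \<le> 2 * x powr ?p"
        using le_p[of "-\<beta>"] le_p[of "\<nu> - \<beta>"] by simp
    qed (use R in auto)
    finally show ?thesis .
  qed
  moreover have "0 \<le> ?C1 * x powr ?p * ?R" "0 \<le> ?C2 * (2 * x powr ?p) * ?R"
    using R by auto
  moreover have "(?C1 + 2 * ?C2) * x powr ?p * ?R = ?C1 * x powr ?p * ?R + ?C2 * (2 * x powr ?p) * ?R"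
    by (simp add: algebra_simps)
  ultimately show ?thesis
    by (cases "x/2 \<le> z") linarith+
qed

lemma integrable_neg_moment:
  fixes M :: "real measure"
  assumes sets_M: "sets M = sets borel"
    and neg_moment: "(\<integral>\<^sup>+z. ennreal ((max (x - z) 0) powr \<beta>) \<partial>M) \<le> ennreal m" and m: "m \<ge> 0"
  shows "integrable M (\<lambda>z. (max (x - z) 0) powr \<beta>)"
    and "(\<integral>z. (max (x - z) 0) powr \<beta> \<partial>M) \<le> m"
proof -
  have meas: "(\<lambda>z. (max (x - z) 0) powr \<beta>) \<in> borel_measurable M"
    by (simp add: measurable_cong_sets[OF sets_M refl])
  show "integrable M (\<lambda>z. (max (x - z) 0) powr \<beta>)"
    using neg_moment by (intro integrableI_nonneg[OF meas]) (auto simp: order_le_less_trans)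
  show "(\<integral>z. (max (x - z) 0) powr \<beta> \<partial>M) \<le> m"
    using neg_moment m by (subst integral_eq_nn_integral[OF meas]) (auto simp: enn2real_leI)
qed

lemma f0_taylor_neg_jump_expectation:
  fixes M :: "real measure"
  assumes sets_M: "sets M = sets borel" and prob_M: "prob_space M"
    and nonneg: "AE z in M. 0 \<le> z" and x: "x \<ge> 2" and \<nu>: "\<nu> \<le> 2" and \<beta>: "\<beta> > 0"
    and neg_moment: "(\<integral>\<^sup>+z. ennreal ((max (x - z) 0) powr \<beta>) \<partial>M) \<le> ennreal m" and m: "m \<ge> 0"
  defines "H \<equiv> \<lambda>z. f0 \<nu> z - x powr \<nu> - \<nu> * x powr (\<nu> - 1) * (z - x) - powr_taylor_rem \<nu> x (max (z - x) 0)"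
  shows "integrable M H"
    and "\<bar>integral\<^sup>L M H\<bar> \<le> (\<bar>\<nu>\<bar> * \<bar>\<nu> - 1\<bar> * 2 powr (2 - \<nu>) + 2 * (2 powr \<beta> * (2 + \<bar>\<nu>\<bar>)))
                            * x powr (max (\<nu> - min \<beta> 2) (-\<beta>)) * (1 + m)"
proof -
  interpret prob_space M by (rule prob_M)
  define C where "C = (\<bar>\<nu>\<bar> * \<bar>\<nu> - 1\<bar> * 2 powr (2 - \<nu>) + 2 * (2 powr \<beta> * (2 + \<bar>\<nu>\<bar>)))
                        * x powr (max (\<nu> - min \<beta> 2) (-\<beta>))"
  have C: "C \<ge> 0" by (simp add: C_def)
  have meas: "f \<in> borel_measurable M" if "f \<in> borel_measurable borel" for f :: "real \<Rightarrow> real"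
    using that by (simp add: measurable_cong_sets[OF sets_M refl])
  have [measurable]: "f0 \<nu> \<in> borel_measurable borel"
    unfolding f0_def[abs_def] by measurable
  note neg_int = integrable_neg_moment[OF sets_M neg_moment m]
  have bound: "\<bar>H z\<bar> \<le> C * (1 + (max (x - z) 0) powr \<beta>)" if "0 \<le> z" for z
  proof (cases "z < x")
    case True
    then show ?thesis
      using f0_taylor_neg_jump_le[OF x that True \<nu> \<beta>] by (simp add: H_def C_def)
  next
    case False
    then show ?thesis using x C by (simp add: H_def f0_def powr_taylor_rem_def)
  qed
  have AE_bound: "AE z in M. \<bar>H z\<bar> \<le> C * (1 + (max (x - z) 0) powr \<beta>)"
    using nonneg by (rule eventually_mono) (rule bound)
  have dom_int: "integrable M (\<lambda>z. C * (1 + (max (x - z) 0) powr \<beta>))"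
    using neg_int(1) by simp
  show H_int: "integrable M H"
  proof (rule Bochner_Integration.integrable_bound[OF dom_int])
    show "H \<in> borel_measurable M"
      unfolding H_def powr_taylor_rem_def by (rule meas) measurable
    show "AE z in M. norm (H z) \<le> norm (C * (1 + (max (x - z) 0) powr \<beta>))"
      using AE_bound by eventually_elim (use C in auto)
  qed
  have "\<bar>integral\<^sup>L M H\<bar> \<le> (\<integral>z. \<bar>H z\<bar> \<partial>M)"
    by (rule integral_abs_bound)
  also have "\<dots> \<le> (\<integral>z. C * (1 + (max (x - z) 0) powr \<beta>) \<partial>M)"
    using H_int dom_int AE_bound by (intro integral_mono_AE) auto
  also have "\<dots> = C * (1 + (\<integral>z. (max (x - z) 0) powr \<beta> \<partial>M))"
    using neg_int(1) by (simp add: prob_space)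
  also have "\<dots> \<le> C * (1 + m)"
    using C neg_int(2) by (intro mult_left_mono) auto
  finally show "\<bar>integral\<^sup>L M H\<bar> \<le> (\<bar>\<nu>\<bar> * \<bar>\<nu> - 1\<bar> * 2 powr (2 - \<nu>) + 2 * (2 powr \<beta> * (2 + \<bar>\<nu>\<bar>)))
                            * x powr (max (\<nu> - min \<beta> 2) (-\<beta>)) * (1 + m)"
    by (simp add: C_def)
qed

section \<open>Asymptotics of the drift\<close>

lemma integrable_jump:
  fixes M :: "real measure"
  assumes sets_M: "sets M = sets borel" and prob_M: "prob_space M"
    and nonneg: "AE z in M. 0 \<le> z" and x: "x \<ge> 0"
    and pos: "integrable M (\<lambda>z. max (z - x) 0)"
  shows "integrable M (\<lambda>z. z - x)"
proof -
  interpret prob_space M by (rule prob_M)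
  have "integrable M (\<lambda>z. max (x - z) 0)"
    using nonneg x
    by (intro integrable_const_bound[where B = x])
       (auto elim!: eventually_mono simp: measurable_cong_sets[OF sets_M refl])
  from Bochner_Integration.integrable_diff[OF pos this]
  have "integrable M (\<lambda>z. max (z - x) 0 - max (x - z) 0)" .
  moreover have "(\<lambda>z. max (z - x) 0 - max (x - z) 0) = (\<lambda>z. z - x)"
    by (auto simp: fun_eq_iff max_def)
  ultimately show ?thesis by simp
qed

lemma f0_expectation_estimate:
  fixes M :: "real measure" and x \<alpha> \<beta> c \<nu> e Y m :: real
  assumes sets_M: "sets M = sets borel" and prob_M: "prob_space M"
    and nonneg: "AE z in M. 0 \<le> z" and x: "x \<ge> 2"
    and \<alpha>: "1 < \<alpha>" "\<alpha> < 2" "\<alpha> < \<beta>" and \<nu>: "\<nu> < \<alpha>"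
    and c: "c > 0" and Y: "Y > 0" and e: "e > 0"
    and tail: "\<And>y. y \<ge> Y \<Longrightarrow> \<bar>y powr \<alpha> * measure M {z. max (z - x) 0 > y} - c\<bar> \<le> e"
    and neg_moment: "(\<integral>\<^sup>+z. ennreal ((max (x - z) 0) powr \<beta>) \<partial>M) \<le> ennreal m" and m: "m \<ge> 0"
  defines "B \<equiv> \<bar>\<nu>\<bar> * \<bar>\<nu> - 1\<bar> * (Y\<^sup>2 / 2 + c * Y powr (2 - \<alpha>) / (2 - \<alpha>))
               + (\<bar>\<nu>\<bar> * \<bar>\<nu> - 1\<bar> * 2 powr (2 - \<nu>) + 2 * (2 powr \<beta> * (2 + \<bar>\<nu>\<bar>))) * (1 + m)"
  shows "\<bar>(\<integral>z. f0 \<nu> z \<partial>M) - f0 \<nu> x - \<nu> * x powr (\<nu> - 1) * (\<integral>z. z - x \<partial>M)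
            - c * \<nu> * x powr (\<nu> - \<alpha>) * kappa0 \<alpha> \<nu>\<bar>
         \<le> e * taylor_tail_const \<alpha> \<nu> * x powr (\<nu> - \<alpha>) + B * x powr (max (\<nu> - min \<beta> 2) (-\<beta>))"
proof -
  interpret prob_space M by (rule prob_M)
  define p where "p = max (\<nu> - min \<beta> 2) (-\<beta>)"
  define G where "G z = powr_taylor_rem \<nu> x (max (z - x) 0)" for z
  define H where "H z = f0 \<nu> z - x powr \<nu> - \<nu> * x powr (\<nu> - 1) * (z - x) - G z" for z
  have x_pos: "x > 0" using x by simp
  note pos = taylor_rem_jump_estimate[OF sets_M prob_M x_pos \<alpha>(1,2) \<nu> c Y e tail]
  have \<beta>_pos: "\<beta> > 0" and \<nu>_le_2: "\<nu> \<le> 2" using \<alpha> \<nu> by linarith+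
  note neg = f0_taylor_neg_jump_expectation[OF sets_M prob_M nonneg x \<nu>_le_2 \<beta>_pos neg_moment m]
  have diff_int: "integrable M (\<lambda>z. z - x)"
    using integrable_pos_jump[OF sets_M prob_M x_pos \<alpha>(1,2) \<nu> c Y e tail] x
    by (intro integrable_jump[OF sets_M prob_M nonneg]) auto
  have G_int: "integrable M G" and H_int: "integrable M H"
    using pos(1) neg(1) by (simp_all add: G_def[abs_def] H_def[abs_def])
  have "(\<integral>z. f0 \<nu> z \<partial>M) = (\<integral>z. x powr \<nu> + \<nu> * x powr (\<nu> - 1) * (z - x) + G z + H z \<partial>M)"
    by (simp add: H_def)
  also have "\<dots> = x powr \<nu> + \<nu> * x powr (\<nu> - 1) * (\<integral>z. z - x \<partial>M) + integral\<^sup>L M G + integral\<^sup>L M H"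
    using diff_int G_int H_int by (simp add: prob_space)
  finally have "(\<integral>z. f0 \<nu> z \<partial>M) - f0 \<nu> x - \<nu> * x powr (\<nu> - 1) * (\<integral>z. z - x \<partial>M)
      - c * \<nu> * x powr (\<nu> - \<alpha>) * kappa0 \<alpha> \<nu>
      = (integral\<^sup>L M G - c * \<nu> * x powr (\<nu> - \<alpha>) * kappa0 \<alpha> \<nu>) + integral\<^sup>L M H"
    using x by (simp add: f0_def)
  moreover have "x powr (\<nu> - 2) \<le> x powr p"
    using x by (intro powr_mono) (auto simp: p_def)
  then have "\<bar>\<nu>\<bar> * \<bar>\<nu> - 1\<bar> * (Y\<^sup>2 / 2 + c * Y powr (2 - \<alpha>) / (2 - \<alpha>)) * x powr (\<nu> - 2)
      \<le> \<bar>\<nu>\<bar> * \<bar>\<nu> - 1\<bar> * (Y\<^sup>2 / 2 + c * Y powr (2 - \<alpha>) / (2 - \<alpha>)) * x powr p"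
    using c \<alpha> by (intro mult_left_mono) auto
  ultimately show ?thesis
    using pos(2) neg(2) unfolding G_def[abs_def] H_def[abs_def] B_def p_def[symmetric]
    by (simp add: algebra_simps) linarith
qed

lemma smallo_powr_if_approx:
  fixes f :: "real \<Rightarrow> real"
  assumes F: "F \<le> at_top" and pq: "p < q" and C: "C \<ge> 0"
    and approx: "\<And>e. e > 0 \<Longrightarrow> \<exists>B. eventually (\<lambda>x. \<bar>f x\<bar> \<le> e * C * x powr q + B * x powr p) F"
  shows "f \<in> o[F](\<lambda>x. x powr q)"
proof (rule landau_o.smallI)
  fix \<epsilon> :: real
  assume \<epsilon>: "\<epsilon> > 0"
  define e where "e = \<epsilon> / (2 * (C + 1))"
  have e: "e > 0" "e * C \<le> \<epsilon> / 2"
    using \<epsilon> C by (auto simp: e_def field_simps)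
  obtain B where B: "eventually (\<lambda>x. \<bar>f x\<bar> \<le> e * C * x powr q + B * x powr p) F"
    using approx[OF e(1)] by blast
  have "((\<lambda>x::real. x powr (p - q)) \<longlongrightarrow> 0) at_top"
    using pq by (intro tendsto_neg_powr filterlim_ident) auto
  then have "((\<lambda>x::real. \<bar>B\<bar> * x powr (p - q)) \<longlongrightarrow> 0) at_top"
    by (rule tendsto_mult_right_zero)
  then have "eventually (\<lambda>x::real. \<bar>B\<bar> * x powr (p - q) < \<epsilon> / 2) at_top"
    using \<epsilon> by (intro order_tendstoD(2)) auto
  moreover have "eventually (\<lambda>x::real. x > 0) at_top" by (rule eventually_gt_at_top)
  ultimately have "eventually (\<lambda>x. B * x powr p \<le> \<epsilon> / 2 * x powr q) at_top"
  proof eventually_elim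
    case (elim x)
    have "B * x powr p \<le> \<bar>B\<bar> * x powr (p - q) * x powr q"
      using elim by (simp add: mult.assoc abs_ge_self mult_right_mono flip: powr_add)
    also have "\<dots> \<le> \<epsilon> / 2 * x powr q"
      using elim by (intro mult_right_mono) auto
    finally show ?case .
  qed
  from filter_leD[OF F this] B show "eventually (\<lambda>x. norm (f x) \<le> \<epsilon> * norm (x powr q)) F"
  proof eventually_elim
    case (elim x)
    have "e * C * x powr q \<le> \<epsilon> / 2 * x powr q"
      using e by (intro mult_right_mono) auto
    then show ?case using elim by simp
  qed
qed

lemma cond_T_D0_estimate:
  fixes X :: "real set" and K :: "real \<Rightarrow> real measure" and \<alpha> \<beta> c x0 \<nu> e :: real
  assumes X_nonneg: "X \<subseteq> {0..}" and X_meas: "X \<in> sets borel"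
    and K_sets: "\<And>x. x \<in> X \<Longrightarrow> sets (K x) = sets borel"
    and K_prob: "\<And>x. x \<in> X \<Longrightarrow> prob_space (K x)"
    and K_X: "\<And>x. x \<in> X \<Longrightarrow> measure (K x) X = 1"
    and T: "cond_T X K \<alpha> \<beta> c x0" and \<nu>: "\<nu> < \<alpha>" and e: "e > 0"
  shows "\<exists>B. \<forall>x\<in>X. x \<ge> max 2 x0 \<longrightarrow>
           \<bar>D0 K \<nu> x - \<nu> * x powr (\<nu> - 1) * mean_incr K x - c * \<nu> * x powr (\<nu> - \<alpha>) * kappa0 \<alpha> \<nu>\<bar>
             \<le> e * taylor_tail_const \<alpha> \<nu> * x powr (\<nu> - \<alpha>) + B * x powr (max (\<nu> - min \<beta> 2) (-\<beta>))"
proof -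
  from T have \<alpha>: "1 < \<alpha>" "\<alpha> < 2" "\<alpha> < \<beta>" and c: "c > 0"
    and tail: "\<forall>\<epsilon>>0. \<exists>Y. \<forall>y\<ge>Y. \<forall>x\<in>X. x \<ge> x0 \<longrightarrow>
                 \<bar>y powr \<alpha> * measure (K x) {z. max (z - x) 0 > y} - c\<bar> \<le> \<epsilon>"
    and neg_sup: "(SUP x\<in>{x\<in>X. x \<ge> x0}. \<integral>\<^sup>+ z. ennreal ((max (x - z) 0) powr \<beta>) \<partial>K x) < \<infinity>"
    unfolding cond_T_def by blast+
  define m where "m = enn2real (SUP x\<in>{x\<in>X. x \<ge> x0}. \<integral>\<^sup>+ z. ennreal ((max (x - z) 0) powr \<beta>) \<partial>K x)"
  have neg_moment: "(\<integral>\<^sup>+ z. ennreal ((max (x - z) 0) powr \<beta>) \<partial>K x) \<le> ennreal m" if "x \<in> X" "x \<ge> x0" for x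
    using neg_sup that by (auto simp: m_def less_top[symmetric] intro: SUP_upper)
  have nonneg: "AE z in K x. 0 \<le> z" if "x \<in> X" for x
    using prob_space.AE_prob_1[OF K_prob[OF that], of X] K_X[OF that] K_sets[OF that] X_meas X_nonneg
    by (auto elim!: eventually_mono)
  from tail e obtain Y where Y: "\<forall>y\<ge>Y. \<forall>x\<in>X. x \<ge> x0 \<longrightarrow>
      \<bar>y powr \<alpha> * measure (K x) {z. max (z - x) 0 > y} - c\<bar> \<le> e" by blast
  define B where "B = \<bar>\<nu>\<bar> * \<bar>\<nu> - 1\<bar> * ((max Y 1)\<^sup>2 / 2 + c * (max Y 1) powr (2 - \<alpha>) / (2 - \<alpha>))
               + (\<bar>\<nu>\<bar> * \<bar>\<nu> - 1\<bar> * 2 powr (2 - \<nu>) + 2 * (2 powr \<beta> * (2 + \<bar>\<nu>\<bar>))) * (1 + m)"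
  show ?thesis
  proof (intro exI[of _ B] ballI impI)
    fix x
    assume "x \<in> X" "max 2 x0 \<le> x"
    then show "\<bar>D0 K \<nu> x - \<nu> * x powr (\<nu> - 1) * mean_incr K x - c * \<nu> * x powr (\<nu> - \<alpha>) * kappa0 \<alpha> \<nu>\<bar>
             \<le> e * taylor_tail_const \<alpha> \<nu> * x powr (\<nu> - \<alpha>) + B * x powr (max (\<nu> - min \<beta> 2) (-\<beta>))"
      unfolding D0_def mean_incr_def B_def
      by (intro f0_expectation_estimate) (use K_sets K_prob nonneg \<alpha> \<nu> c e Y neg_moment in \<open>auto simp: m_def\<close>)
  qed
qed

theorem lemma4p2:
  fixes X :: "real set" and K :: "real \<Rightarrow> real measure"
    and \<alpha> \<beta> c x0 \<nu> :: real
  assumes X_nonneg: "X \<subseteq> {0..}"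
    and X_meas: "X \<in> sets borel"
    and K_sets: "\<And>x. x \<in> X \<Longrightarrow> sets (K x) = sets borel"
    and K_prob: "\<And>x. x \<in> X \<Longrightarrow> prob_space (K x)"
    and K_X: "\<And>x. x \<in> X \<Longrightarrow> measure (K x) X = 1"
    and T: "cond_T X K \<alpha> \<beta> c x0"
    and nu_lo: "\<alpha> - \<beta> < \<nu>" and nu_hi: "\<nu> < \<alpha>"
  shows "(\<lambda>x. D0 K \<nu> x - \<nu> * x powr (\<nu> - 1) * mean_incr K x
               - c * \<nu> * x powr (\<nu> - \<alpha>) * kappa0 \<alpha> \<nu>)
         \<in> o[at_top \<sqinter> principal X](\<lambda>x. x powr (\<nu> - \<alpha>))"
proof (rule smallo_powr_if_approx[where p = "max (\<nu> - min \<beta> 2) (-\<beta>)" and C = "taylor_tail_const \<alpha> \<nu>"])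
  have \<alpha>: "1 < \<alpha>" "\<alpha> < 2" "\<alpha> < \<beta>" using T by (simp_all add: cond_T_def)
  then show "max (\<nu> - min \<beta> 2) (-\<beta>) < \<nu> - \<alpha>" "0 \<le> taylor_tail_const \<alpha> \<nu>"
    using nu_lo nu_hi taylor_tail_const_nonneg by auto
  fix e :: real
  assume "e > 0"
  from cond_T_D0_estimate[OF assms(1-6) nu_hi this] obtain B where B: "\<forall>x\<in>X. x \<ge> max 2 x0 \<longrightarrow>
      \<bar>D0 K \<nu> x - \<nu> * x powr (\<nu> - 1) * mean_incr K x - c * \<nu> * x powr (\<nu> - \<alpha>) * kappa0 \<alpha> \<nu>\<bar>
        \<le> e * taylor_tail_const \<alpha> \<nu> * x powr (\<nu> - \<alpha>) + B * x powr (max (\<nu> - min \<beta> 2) (-\<beta>))" ..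
  have "eventually (\<lambda>x. x \<ge> max 2 x0) (at_top \<sqinter> principal X)"
    by (rule filter_leD[OF inf_le1 eventually_ge_at_top])
  then show "\<exists>B. eventually (\<lambda>x. \<bar>D0 K \<nu> x - \<nu> * x powr (\<nu> - 1) * mean_incr K x
      - c * \<nu> * x powr (\<nu> - \<alpha>) * kappa0 \<alpha> \<nu>\<bar> \<le> e * taylor_tail_const \<alpha> \<nu> * x powr (\<nu> - \<alpha>)
      + B * x powr (max (\<nu> - min \<beta> 2) (-\<beta>))) (at_top \<sqinter> principal X)"
    using B by (auto simp: eventually_inf_principal elim!: eventually_mono)
qed simp

end
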